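(* Let $m,n$ be positive integers, let $\theta=\frac{\max\{n+1,m+2\}}{m}$, and let $\Phi:\mathbb{N}\to(0,\infty)$ satisfy $\Phi(t)\le t^{-n/m}$ for $t\ge1$ and $\tau:=\liminf_{t\to\infty}\frac{-\log\Phi(t)}{\log t}>\theta$. Let $\mathbf{a}\in\mathbb{R}^{m}$ (a column vector) belong to $Exact^{m,1}(\Phi)$. Then for Lebesgue-almost every matrix $U\in\mathbb{R}^{m\times(n-1)}$ (with respect to $(n-1)m$-dimensional Lebesgue measure), the matrix $A=(\mathbf{a},U)\in\mathbb{R}^{m\times n}$, whose first column is $\mathbf{a}$ followed by the columns of $U$, belongs to $Exact^{m,n}(\Phi)$.
   Context: All norms are maximum norms. For positive integers $m,n$ and $\Psi:\mathbb{N}\to(0,\infty)$, $W^{m,n}(\Psi)$ is the set of real $m\times n$ matrices $A$ such that $\Vert A\mathbf{q}-\mathbf{p}\Vert\le\Psi(\Vert\mathbf{q}\Vert)$ for infinitely many $\mathbf{p}\in\mathbb{Z}^m$, $\mathbf{q}\in\mathbb{Z}^n\setminus\{0\}$, and $Exact^{m,n}(\Phi)=W^{m,n}(\Phi)\setminus\bigcup_{c>1}W^{m,n}(\Phi/c)$, where $\Phi/c$ is $t\mapsto\Phi(t)/c$. $Exact^{m,1}(\Phi)\subseteq\mathbb{R}^m$ is the case $n=1$ (vectors viewed as $m\times1$ matrices). *)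

theory Defs
  imports "HOL-Analysis.Analysis" "HOL-Probability.Probability"
begin

definition intvecs :: "nat \<Rightarrow> (nat \<Rightarrow> int) set" where
  "intvecs k = {q. \<forall>i\<ge>k. q i = 0}"

definition inorm :: "nat \<Rightarrow> (nat \<Rightarrow> int) \<Rightarrow> nat" where
  "inorm k q = Max ({0} \<union> {nat \<bar>q i\<bar> | i. i < k})"

definition resnorm :: "nat \<Rightarrow> nat \<Rightarrow> (nat \<Rightarrow> nat \<Rightarrow> real) \<Rightarrow> (nat \<Rightarrow> int) \<Rightarrow> (nat \<Rightarrow> int) \<Rightarrow> real" where
  "resnorm m n A p q = Max ({0} \<union> {\<bar>(\<Sum>j<n. A i j * of_int (q j)) - of_int (p i)\<bar> | i. i < m})"

definition W :: "nat \<Rightarrow> nat \<Rightarrow> (nat \<Rightarrow> real) \<Rightarrow> (nat \<Rightarrow> nat \<Rightarrow> real) set" where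
  "W m n \<Psi> = {A. infinite {(p, q). p \<in> intvecs m \<and> q \<in> intvecs n \<and> q \<noteq> (\<lambda>_. 0) \<and>
                  resnorm m n A p q \<le> \<Psi> (inorm n q)}}"

definition Exact :: "nat \<Rightarrow> nat \<Rightarrow> (nat \<Rightarrow> real) \<Rightarrow> (nat \<Rightarrow> nat \<Rightarrow> real) set" where
  "Exact m n \<Phi> = W m n \<Phi> - (\<Union>c\<in>{c::real. c > 1}. W m n (\<lambda>t. \<Phi> t / c))"

end

theory Submission
  imports Defs
begin

(* Write q = (q_0, q') with q' in Z^(n-1). Then (a, U) q = q_0 a + U q', so the solutions (p, q)
   with q' = 0 are exactly the solutions of the one-column problem for a: there are infinitely
   many for Phi and finitely many for Phi / c. It remains to show that for almost every U only
   finitely many solutions have q' <> 0. Restrict U to a box of side 2K. If q_(j+1) <> 0,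
   integrating first over column j of U shows that the U with dist((a, U) q, Z^m) <= psi form a
   set of measure O(psi^m). There are O(t^n) vectors q of norm t, and sum_t t^n Phi(t)^m < oo
   since liminf -log Phi(t) / log t > (n + 1) / m, so Borel-Cantelli applies. *)

definition dist_int :: "real \<Rightarrow> real" where
  "dist_int x = \<bar>x - of_int (round x)\<bar>"

lemma dist_int_le: "dist_int x \<le> \<bar>x - of_int p\<bar>"
  unfolding dist_int_def by (rule round_diff_minimal)

lemma borel_measurable_dist_int [measurable]: "dist_int \<in> borel_measurable borel"
proof -
  have "dist_int = (\<lambda>x. \<bar>x - real_of_int \<lfloor>x + 1/2\<rfloor>\<bar>)"
    by (auto simp: dist_int_def round_def fun_eq_iff)
  moreover have "(\<lambda>x::real. \<bar>x - real_of_int \<lfloor>x + 1/2\<rfloor>\<bar>) \<in> borel_measurable borel"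
    using borel_measurable_real_floor by measurable
  ultimately show ?thesis by simp
qed

lemma ints_near_subset:
  "{p::int. \<bar>of_int p - c\<bar> \<le> r} \<subseteq> {\<lceil>c - r\<rceil>..\<lfloor>c + r\<rfloor>}" for c r :: real
  by (auto simp: ceiling_le_iff le_floor_iff abs_le_iff)

lemma finite_ints_near: "finite {p::int. \<bar>of_int p - c\<bar> \<le> r}" for c r :: real
  using ints_near_subset by (rule finite_subset) simp

lemma card_ints_near:
  fixes c r :: real
  assumes "r \<ge> 0"
  shows "real (card {p::int. \<bar>of_int p - c\<bar> \<le> r}) \<le> 2 * r + 1"
proof -
  have "card {p::int. \<bar>of_int p - c\<bar> \<le> r} \<le> card {\<lceil>c - r\<rceil>..\<lfloor>c + r\<rfloor>}"
    using card_mono[OF _ ints_near_subset] by simp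
  also have "\<dots> = nat (\<lfloor>c + r\<rfloor> + 1 - \<lceil>c - r\<rceil>)"
    by simp
  finally have "real (card {p::int. \<bar>of_int p - c\<bar> \<le> r})
                  \<le> max 0 (real_of_int (\<lfloor>c + r\<rfloor> + 1 - \<lceil>c - r\<rceil>))"
    by linarith
  moreover have "real_of_int \<lfloor>c + r\<rfloor> \<le> c + r" "c - r \<le> real_of_int \<lceil>c - r\<rceil>"
    by simp_all
  ultimately show ?thesis
    using assms by linarith
qed

lemma inj_on_restrict_intvecs: "inj_on (\<lambda>p. restrict p {..<m}) (intvecs m)"
proof (rule inj_onI, rule ext)
  fix p p' i assume p: "p \<in> intvecs m" "p' \<in> intvecs m"
    and eq: "restrict p {..<m} = restrict p' {..<m}"
  show "p i = p' i"
  proof (cases "i < m")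
    case True
    then show ?thesis using fun_cong[OF eq, of i] by simp
  next
    case False
    then show ?thesis using p by (simp add: intvecs_def)
  qed
qed

lemma intvecs_box_restrict:
  "(\<lambda>p. restrict p {..<m}) ` {p \<in> intvecs m. \<forall>i<m. \<bar>of_int (p i) - x i\<bar> \<le> r}
     \<subseteq> PiE {..<m} (\<lambda>i. {z::int. \<bar>of_int z - x i\<bar> \<le> r})" for x :: "nat \<Rightarrow> real"
  unfolding image_subset_iff restrict_PiE_iff by simp

lemma finite_intvecs_box:
  "finite {p \<in> intvecs m. \<forall>i<m. \<bar>of_int (p i) - x i\<bar> \<le> r}" for x :: "nat \<Rightarrow> real"
proof (rule finite_imageD)
  show "finite ((\<lambda>p. restrict p {..<m}) ` {p \<in> intvecs m. \<forall>i<m. \<bar>of_int (p i) - x i\<bar> \<le> r})"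
    using intvecs_box_restrict by (rule finite_subset) (intro finite_PiE finite_ints_near; simp)
  show "inj_on (\<lambda>p. restrict p {..<m}) {p \<in> intvecs m. \<forall>i<m. \<bar>of_int (p i) - x i\<bar> \<le> r}"
    by (rule inj_on_subset[OF inj_on_restrict_intvecs]) auto
qed

lemma card_intvecs_box:
  fixes x :: "nat \<Rightarrow> real"
  assumes "r \<ge> 0"
  shows "real (card {p \<in> intvecs m. \<forall>i<m. \<bar>of_int (p i) - x i\<bar> \<le> r}) \<le> (2 * r + 1) ^ m"
proof -
  have "card {p \<in> intvecs m. \<forall>i<m. \<bar>of_int (p i) - x i\<bar> \<le> r}
          \<le> card (PiE {..<m} (\<lambda>i. {z::int. \<bar>of_int z - x i\<bar> \<le> r}))"
    by (rule card_inj_on_le[OF inj_on_subset[OF inj_on_restrict_intvecs] intvecs_box_restrict])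
       (auto intro: finite_PiE finite_ints_near)
  also have "\<dots> = (\<Prod>i<m. card {z::int. \<bar>of_int z - x i\<bar> \<le> r})"
    by (simp add: card_PiE)
  finally have "real (card {p \<in> intvecs m. \<forall>i<m. \<bar>of_int (p i) - x i\<bar> \<le> r})
                  \<le> (\<Prod>i<m. real (card {z::int. \<bar>of_int z - x i\<bar> \<le> r}))"
    by (simp flip: of_nat_prod)
  also have "\<dots> \<le> (\<Prod>i<m. 2 * r + 1)"
    using assms by (intro prod_mono conjI card_ints_near) auto
  finally show ?thesis by simp
qed

lemma abs_le_inorm: "i < n \<Longrightarrow> \<bar>q i\<bar> \<le> int (inorm n q)"
proof -
  assume "i < n"
  then have "nat \<bar>q i\<bar> \<le> inorm n q"
    unfolding inorm_def by (intro Max_ge) auto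
  then show ?thesis by linarith
qed

lemma inorm_eq_subset_box:
  "{q \<in> intvecs n. inorm n q = t} \<subseteq> {q \<in> intvecs n. \<forall>i<n. \<bar>of_int (q i) - 0\<bar> \<le> real t}"
proof
  fix q assume "q \<in> {q \<in> intvecs n. inorm n q = t}"
  then have q: "q \<in> intvecs n" "inorm n q = t" by auto
  have "\<bar>of_int (q i) - 0\<bar> \<le> real t" if "i < n" for i
    using abs_le_inorm[OF that, of q] q(2) by linarith
  with q(1) show "q \<in> {q \<in> intvecs n. \<forall>i<n. \<bar>of_int (q i) - 0\<bar> \<le> real t}" by blast
qed

lemma finite_intvecs_inorm_eq: "finite {q \<in> intvecs n. inorm n q = t}"
  using inorm_eq_subset_box by (rule finite_subset) (rule finite_intvecs_box)

lemma card_intvecs_inorm_eq: "real (card {q \<in> intvecs n. inorm n q = t}) \<le> (2 * real t + 1) ^ n"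
proof -
  have "card {q \<in> intvecs n. inorm n q = t}
          \<le> card {q \<in> intvecs n. \<forall>i<n. \<bar>of_int (q i) - 0\<bar> \<le> real t}"
    by (rule card_mono[OF finite_intvecs_box inorm_eq_subset_box])
  moreover have "real (card {q \<in> intvecs n. \<forall>i<n. \<bar>of_int (q i) - 0\<bar> \<le> real t})
                   \<le> (2 * real t + 1) ^ n"
    by (rule card_intvecs_box) simp
  ultimately show ?thesis by linarith
qed

lemma inorm_pos: "q \<in> intvecs n \<Longrightarrow> q \<noteq> (\<lambda>_. 0) \<Longrightarrow> inorm n q \<ge> 1"
proof -
  assume q: "q \<in> intvecs n" "q \<noteq> (\<lambda>_. 0)"
  then obtain i where i: "q i \<noteq> 0" by auto
  have "\<not> n \<le> i" using q(1) i by (auto simp: intvecs_def)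
  then show ?thesis using abs_le_inorm[of i n q] i by linarith
qed

lemma inorm_eq_of_intvecs:
  assumes "k \<le> n" "q \<in> intvecs k"
  shows "inorm n q = inorm k q"
proof -
  have absorb: "X \<subseteq> {0} \<union> Y \<Longrightarrow> Y \<subseteq> X \<Longrightarrow> {0} \<union> X = {0} \<union> Y" for X Y :: "nat set"
    by blast
  have "{nat \<bar>q i\<bar> | i. i < n} \<subseteq> {0} \<union> {nat \<bar>q i\<bar> | i. i < k}"
  proof
    fix x assume "x \<in> {nat \<bar>q i\<bar> | i. i < n}"
    then obtain i where x: "x = nat \<bar>q i\<bar>" "i < n" by blast
    show "x \<in> {0} \<union> {nat \<bar>q i\<bar> | i. i < k}"
    proof (cases "i < k")
      case True
      with x show ?thesis by blast
    next
      case False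
      then have "q i = 0" using assms(2) by (simp add: intvecs_def)
      with x show ?thesis by simp
    qed
  qed
  then have "{0} \<union> {nat \<bar>q i\<bar> | i. i < n} = {0} \<union> {nat \<bar>q i\<bar> | i. i < k}"
    by (rule absorb) (use assms(1) in \<open>blast intro: order_less_le_trans\<close>)
  then show ?thesis unfolding inorm_def by (rule arg_cong)
qed

lemma abs_le_resnorm:
  "i < m \<Longrightarrow> \<bar>(\<Sum>j<n. A i j * of_int (q j)) - of_int (p i)\<bar> \<le> resnorm m n A p q"
  unfolding resnorm_def by (intro Max_ge) auto

lemma emeasure_near_int_affine_le:
  fixes s :: int and c K \<psi> :: real
  assumes s: "s \<noteq> 0" and K: "K \<ge> 0" and \<psi>: "0 \<le> \<psi>" "\<psi> \<le> 1"
  shows "emeasure lborel {u \<in> {-K..K}. dist_int (c + u * of_int s) \<le> \<psi>}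
           \<le> ennreal ((2 * K + 3) * (2 * \<psi>))"
proof -
  define P where "P = {p::int. \<bar>of_int p - c\<bar> \<le> K * \<bar>of_int s\<bar> + 1}"
  define r where "r = \<psi> / \<bar>of_int s\<bar>"
  define ival where
    "ival p = {(of_int p - c) / of_int s - r .. (of_int p - c) / of_int s + r}" for p
  have r: "r \<ge> 0" using \<psi> by (simp add: r_def)
  have "{u \<in> {-K..K}. dist_int (c + u * of_int s) \<le> \<psi>} \<subseteq> (\<Union>p\<in>P. ival p)"
  proof
    fix u assume u: "u \<in> {u \<in> {-K..K}. dist_int (c + u * of_int s) \<le> \<psi>}"
    define p where "p = round (c + u * of_int s)"
    have close: "\<bar>c + u * of_int s - of_int p\<bar> \<le> \<psi>"
      using u by (simp add: dist_int_def p_def)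
    have "\<bar>u\<bar> \<le> K" using u by auto
    then have "\<bar>u * of_int s\<bar> \<le> K * \<bar>of_int s\<bar>"
      by (simp add: abs_mult mult_right_mono)
    then have "p \<in> P" using close \<psi> by (auto simp: P_def abs_le_iff)
    moreover have "\<bar>u - (of_int p - c) / of_int s\<bar> = \<bar>c + u * of_int s - of_int p\<bar> / \<bar>of_int s\<bar>"
      using s by (simp add: field_simps flip: abs_divide)
    then have "\<bar>u - (of_int p - c) / of_int s\<bar> \<le> r"
      using close by (simp add: r_def divide_right_mono)
    ultimately show "u \<in> (\<Union>p\<in>P. ival p)"
      by (intro UN_I[of p]) (auto simp: ival_def abs_le_iff)
  qed
  then have "emeasure lborel {u \<in> {-K..K}. dist_int (c + u * of_int s) \<le> \<psi>}
               \<le> emeasure lborel (\<Union>p\<in>P. ival p)"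
    by (rule emeasure_mono) (simp add: ival_def)
  also have "\<dots> \<le> (\<Sum>p\<in>P. emeasure lborel (ival p))"
    by (rule emeasure_subadditive_finite) (auto simp: P_def ival_def finite_ints_near)
  also have "\<dots> = ennreal (real (card P) * (2 * r))"
    using r by (simp add: ival_def emeasure_lborel_Icc ennreal_of_nat_eq_real_of_nat ennreal_mult)
  also have "\<dots> \<le> ennreal ((2 * K + 3) * (2 * \<psi>))"
  proof (rule ennreal_leI)
    have "real (card P) * (2 * r) \<le> (2 * (K * \<bar>of_int s\<bar> + 1) + 1) * (2 * r)"
      unfolding P_def using K r by (intro mult_right_mono card_ints_near) auto
    also have "\<dots> = (2 * K + 3 / \<bar>of_int s\<bar>) * (2 * \<psi>)"
      using s by (simp add: r_def field_simps)
    also have "\<dots> \<le> (2 * K + 3) * (2 * \<psi>)"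
      using s \<psi> by (intro mult_right_mono) (auto simp: field_simps)
    finally show "real (card P) * (2 * r) \<le> (2 * K + 3) * (2 * \<psi>)" .
  qed
  finally show ?thesis .
qed

lemma emeasure_PiM_lborel_PiE_le:
  fixes S :: "'i \<Rightarrow> real set"
  assumes J: "finite J" and S: "\<And>k. k \<in> J \<Longrightarrow> S k \<in> sets lborel"
    and S_le: "\<And>k. k \<in> J \<Longrightarrow> emeasure lborel (S k) \<le> ennreal B" and B: "B \<ge> 0"
  shows "emeasure (PiM J (\<lambda>_. lborel)) (PiE J S) \<le> ennreal (B ^ card J)"
proof -
  interpret product_sigma_finite "\<lambda>_. lborel :: real measure"
    by (simp add: product_sigma_finite_def sigma_finite_lborel)
  have "emeasure (PiM J (\<lambda>_. lborel)) (PiE J S) = (\<Prod>k\<in>J. emeasure lborel (S k))"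
    using J S by (rule emeasure_PiM)
  also have "\<dots> \<le> (\<Prod>k\<in>J. ennreal B)"
    using S_le by (rule prod_mono_ennreal)
  finally show ?thesis
    using B by (simp add: ennreal_power)
qed

lemma emeasure_PiM_lborel_le_by_slices:
  fixes E :: "('i \<Rightarrow> real) set" and S :: "('i \<Rightarrow> real) \<Rightarrow> 'i \<Rightarrow> real set"
  assumes I: "finite I" and J: "J \<subseteq> I" and E: "E \<in> sets (PiM I (\<lambda>_. lborel))"
    and K: "K \<ge> 0" and B: "B \<ge> 0"
    and box: "\<And>U k. U \<in> E \<Longrightarrow> k \<in> I - J \<Longrightarrow> \<bar>U k\<bar> \<le> K"
    and slice: "\<And>x y k. merge (I - J) J (x, y) \<in> E \<Longrightarrow> k \<in> J \<Longrightarrow> y k \<in> S x k"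
    and S: "\<And>x k. S x k \<in> sets lborel" and S_le: "\<And>x k. emeasure lborel (S x k) \<le> ennreal B"
  shows "emeasure (PiM I (\<lambda>_. lborel)) E \<le> ennreal ((2 * K) ^ card (I - J) * B ^ card J)"
proof -
  let ?M = "\<lambda>X. PiM X (\<lambda>_. lborel :: real measure)"
  define box_rest where "box_rest = PiE (I - J) (\<lambda>_. {-K..K})"
  interpret product_sigma_finite "\<lambda>_. lborel :: real measure"
    by (simp add: product_sigma_finite_def sigma_finite_lborel)
  have fin: "finite (I - J)" "finite J" using I J by (auto intro: finite_subset)
  have IJ: "(I - J) \<union> J = I" using J by auto
  have slice_le: "indicator E (merge (I - J) J (x, y))
                    \<le> indicator box_rest x * (indicator (PiE J (S x)) y :: ennreal)"
    if x: "x \<in> space (?M (I - J))" and y: "y \<in> space (?M J)" for x y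
  proof (cases "merge (I - J) J (x, y) \<in> E")
    case True
    have "x k \<in> {-K..K}" if "k \<in> I - J" for k
      using box[OF True that] that by (simp add: merge_def abs_le_iff)
    then have "x \<in> box_rest" using x by (auto simp: box_rest_def space_PiM PiE_def Pi_def)
    moreover have "y \<in> PiE J (S x)"
      using slice[OF True] y by (auto simp: space_PiM PiE_def Pi_def)
    ultimately show ?thesis using True by simp
  qed simp
  have "emeasure (?M I) E = (\<integral>\<^sup>+U. indicator E U \<partial>?M I)"
    using E by simp
  also have "\<dots> = (\<integral>\<^sup>+x. (\<integral>\<^sup>+y. indicator E (merge (I - J) J (x, y)) \<partial>?M J) \<partial>?M (I - J))"
    using product_nn_integral_fold[of "I - J" J "indicator E", unfolded IJ] fin E
    by (simp add: Int_commute)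
  also have "\<dots> \<le> (\<integral>\<^sup>+x. ennreal (B ^ card J) * indicator box_rest x \<partial>?M (I - J))"
  proof (rule nn_integral_mono)
    fix x assume x: "x \<in> space (?M (I - J))"
    have "(\<integral>\<^sup>+y. indicator E (merge (I - J) J (x, y)) \<partial>?M J)
            \<le> (\<integral>\<^sup>+y. indicator box_rest x * indicator (PiE J (S x)) y \<partial>?M J)"
      by (rule nn_integral_mono) (rule slice_le[OF x])
    also have "\<dots> = indicator box_rest x * emeasure (?M J) (PiE J (S x))"
      using fin S by (intro nn_integral_cmult_indicator sets_PiM_I_finite) auto
    also have "\<dots> \<le> indicator box_rest x * ennreal (B ^ card J)"
      using fin S S_le B by (intro mult_left_mono emeasure_PiM_lborel_PiE_le) auto
    finally show "(\<integral>\<^sup>+y. indicator E (merge (I - J) J (x, y)) \<partial>?M J)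
                    \<le> ennreal (B ^ card J) * indicator box_rest x"
      by (simp add: mult.commute)
  qed
  also have "\<dots> = ennreal (B ^ card J) * emeasure (?M (I - J)) box_rest"
    by (rule nn_integral_cmult_indicator) (use fin in \<open>simp add: box_rest_def sets_PiM_I_finite\<close>)
  also have "\<dots> \<le> ennreal (B ^ card J) * ennreal ((2 * K) ^ card (I - J))"
    unfolding box_rest_def using fin K
    by (intro mult_left_mono emeasure_PiM_lborel_PiE_le) (auto simp: emeasure_lborel_Icc)
  finally show ?thesis
    using B K by (simp add: ennreal_mult' mult.commute)
qed

definition approx_set ::
    "nat \<Rightarrow> nat \<Rightarrow> (nat \<Rightarrow> real) \<Rightarrow> (nat \<Rightarrow> nat \<Rightarrow> real) \<Rightarrow> ((nat \<Rightarrow> int) \<times> (nat \<Rightarrow> int)) set"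
  where "approx_set m n \<Psi> A = {(p, q). p \<in> intvecs m \<and> q \<in> intvecs n \<and> q \<noteq> (\<lambda>_. 0) \<and>
                                   resnorm m n A p q \<le> \<Psi> (inorm n q)}"

lemma mem_Exact_iff:
  "A \<in> Exact m n \<Phi> \<longleftrightarrow>
     infinite (approx_set m n \<Phi> A) \<and> (\<forall>c>1. finite (approx_set m n (\<lambda>t. \<Phi> t / c) A))"
  by (auto simp: Exact_def W_def approx_set_def)

lemma approx_set_mono: "(\<And>t. \<Psi> t \<le> \<Psi>' t) \<Longrightarrow> approx_set m n \<Psi> A \<subseteq> approx_set m n \<Psi>' A"
  by (auto simp: approx_set_def intro: order_trans)

lemma finite_approx_set_inorm_less: "finite {x \<in> approx_set m n \<Psi> A. inorm n (snd x) < T}"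
proof (rule finite_subset)
  define box_q where "box_q = {q \<in> intvecs n. \<forall>i<n. \<bar>of_int (q i) - 0\<bar> \<le> real T}"
  define near_p where "near_p q = {p \<in> intvecs m. \<forall>i<m.
      \<bar>of_int (p i) - (\<Sum>j<n. A i j * of_int (q j))\<bar> \<le> \<Psi> (inorm n q)}" for q
  show "{x \<in> approx_set m n \<Psi> A. inorm n (snd x) < T} \<subseteq> (\<Union>q\<in>box_q. near_p q \<times> {q})"
  proof
    fix x assume x: "x \<in> {x \<in> approx_set m n \<Psi> A. inorm n (snd x) < T}"
    obtain p q where x_eq: "x = (p, q)" by fastforce
    with x have pq: "(p, q) \<in> approx_set m n \<Psi> A" "inorm n q < T" by auto
    have "\<bar>of_int (q i) - 0\<bar> \<le> real T" if "i < n" for i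
      using abs_le_inorm[OF that, of q] pq(2) by linarith
    moreover have "\<bar>of_int (p i) - (\<Sum>j<n. A i j * of_int (q j))\<bar> \<le> \<Psi> (inorm n q)" if "i < m" for i
    proof -
      have "\<bar>of_int (p i) - (\<Sum>j<n. A i j * of_int (q j))\<bar> \<le> resnorm m n A p q"
        using abs_le_resnorm[OF that] by (simp add: abs_minus_commute)
      with pq(1) show ?thesis by (simp add: approx_set_def)
    qed
    ultimately show "x \<in> (\<Union>q\<in>box_q. near_p q \<times> {q})"
      using pq(1) x_eq by (auto simp: approx_set_def box_q_def near_p_def)
  qed
  show "finite (\<Union>q\<in>box_q. near_p q \<times> {q})"
    unfolding box_q_def near_p_def
    by (intro finite_UN_I finite_intvecs_box finite_cartesian_product) auto
qed

definition ext_col :: "(nat \<Rightarrow> real) \<Rightarrow> (nat \<times> nat \<Rightarrow> real) \<Rightarrow> nat \<Rightarrow> nat \<Rightarrow> real"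
  where "ext_col a U = (\<lambda>i j. if j = 0 then a i else U (i, j - 1))"

lemma sum_ext_col:
  assumes "n \<ge> 1"
  shows "(\<Sum>j<n. ext_col a U i j * of_int (q j))
           = a i * of_int (q 0) + (\<Sum>j<n - 1. U (i, j) * of_int (q (Suc j)))"
proof -
  obtain n' where "n = Suc n'" using assms by (cases n) auto
  then show ?thesis by (simp add: ext_col_def sum.lessThan_Suc_shift del: sum.lessThan_Suc)
qed

lemma approx_set_ext_col_intvecs_1:
  assumes "n \<ge> 1"
  shows "{x \<in> approx_set m n \<Psi> (ext_col a U). snd x \<in> intvecs 1} = approx_set m 1 \<Psi> (\<lambda>i j. a i)"
proof -
  have "resnorm m n (ext_col a U) p q = resnorm m 1 (\<lambda>i j. a i) p q" if "q \<in> intvecs 1" for p q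
    using that unfolding resnorm_def sum_ext_col[OF assms] by (simp add: intvecs_def)
  moreover have "q \<in> intvecs n" if "q \<in> intvecs 1" for q
    using that assms by (auto simp: intvecs_def)
  ultimately show ?thesis
    using inorm_eq_of_intvecs[OF assms] by (auto simp: approx_set_def)
qed

lemma ext_col_in_Exact:
  assumes n: "n \<ge> 1" and \<Phi>: "\<And>t. \<Phi> t > 0" and a: "(\<lambda>i j. a i) \<in> Exact m 1 \<Phi>"
    and fin: "finite {x \<in> approx_set m n \<Phi> (ext_col a U). snd x \<notin> intvecs 1}"
  shows "ext_col a U \<in> Exact m n \<Phi>"
proof -
  have split: "approx_set m n \<Psi> (ext_col a U) =
      {x \<in> approx_set m n \<Psi> (ext_col a U). snd x \<notin> intvecs 1} \<union> approx_set m 1 \<Psi> (\<lambda>i j. a i)"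
    for \<Psi>
    using approx_set_ext_col_intvecs_1[OF n, of m \<Psi> a U] by blast
  have "finite (approx_set m n (\<lambda>t. \<Phi> t / c) (ext_col a U))" if c: "c > 1" for c
  proof -
    have "approx_set m n (\<lambda>t. \<Phi> t / c) (ext_col a U) \<subseteq> approx_set m n \<Phi> (ext_col a U)"
      using \<Phi> c by (intro approx_set_mono) (simp add: less_imp_le divide_le_eq)
    then have "finite {x \<in> approx_set m n (\<lambda>t. \<Phi> t / c) (ext_col a U). snd x \<notin> intvecs 1}"
      by (intro finite_subset[OF _ fin]) blast
    then show ?thesis
      using a c by (subst split) (simp add: mem_Exact_iff)
  qed
  moreover have "infinite (approx_set m n \<Phi> (ext_col a U))"
    using a by (subst split) (simp add: mem_Exact_iff)
  ultimately show ?thesis by (simp add: mem_Exact_iff)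
qed

definition approx_event ::
    "nat \<Rightarrow> nat \<Rightarrow> (nat \<Rightarrow> real) \<Rightarrow> real \<Rightarrow> real \<Rightarrow> (nat \<Rightarrow> int) \<Rightarrow> (nat \<times> nat \<Rightarrow> real) set"
  where "approx_event m n a K \<psi> q = {U \<in> space (PiM ({..<m} \<times> {..<n - 1}) (\<lambda>_. lborel)).
           (\<forall>k\<in>{..<m} \<times> {..<n - 1}. \<bar>U k\<bar> \<le> K) \<and>
           (\<forall>i<m. dist_int (\<Sum>j<n. ext_col a U i j * of_int (q j)) \<le> \<psi>)}"

lemma sets_approx_event:
  "approx_event m n a K \<psi> q \<in> sets (PiM ({..<m} \<times> {..<n - 1}) (\<lambda>_. lborel))"
proof -
  let ?I = "{..<m} \<times> {..<n - 1}"
  let ?M = "PiM ?I (\<lambda>_. lborel :: real measure)"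
  have component [measurable]: "k \<in> ?I \<Longrightarrow> (\<lambda>U. U k) \<in> borel_measurable ?M" for k
    by (rule measurable_component_singleton[where M = "\<lambda>_. lborel", simplified])
  have [measurable]: "(\<lambda>U. ext_col a U i j) \<in> borel_measurable ?M" if "i < m" "j < n" for i j
  proof (cases "j = 0")
    case False
    then have "(i, j - 1) \<in> ?I" using that by auto
    with False show ?thesis
      unfolding ext_col_def using component[OF \<open>(i, j - 1) \<in> ?I\<close>] by simp
  qed (simp add: ext_col_def)
  show ?thesis
    unfolding approx_event_def by measurable
qed

lemma ex_nonzero_tail_coord:
  assumes "q \<in> intvecs n" "q \<notin> intvecs 1"
  obtains j where "j < n - 1" "q (Suc j) \<noteq> 0"
proof -
  obtain i where i: "i \<ge> 1" "q i \<noteq> 0" using assms(2) by (auto simp: intvecs_def)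
  have "\<not> n \<le> i" using assms(1) i(2) by (auto simp: intvecs_def)
  with i show ?thesis using that[of "i - 1"] by simp
qed

lemma emeasure_approx_event_le:
  assumes j0: "j0 < n - 1" "q (Suc j0) \<noteq> 0" and K: "K \<ge> 0" and \<psi>: "0 \<le> \<psi>" "\<psi> \<le> 1"
  shows "emeasure (PiM ({..<m} \<times> {..<n - 1}) (\<lambda>_. lborel)) (approx_event m n a K \<psi> q)
           \<le> ennreal ((2 * K) ^ (m * (n - 1) - m) * ((2 * K + 3) * (2 * \<psi>)) ^ m)"
proof -
  define I where "I = {..<m} \<times> {..<n - 1}"
  define J where "J = {..<m} \<times> {j0}"
  define c where
    "c x i = a i * of_int (q 0) + (\<Sum>j\<in>{..<n - 1} - {j0}. x (i, j) * of_int (q (Suc j)))"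
    for x :: "nat \<times> nat \<Rightarrow> real" and i
  define S where "S x k = {u \<in> {-K..K}. dist_int (c x (fst k) + u * of_int (q (Suc j0))) \<le> \<psi>}"
    for x and k :: "nat \<times> nat"
  have n: "n \<ge> 1" using j0 by simp
  have JI: "J \<subseteq> I" using j0 by (auto simp: I_def J_def)
  have card_J: "card J = m" by (simp add: J_def card_cartesian_product)
  have "card (I - J) = card I - card J"
    by (rule card_Diff_subset) (use JI in \<open>auto simp: J_def\<close>)
  then have card_IJ: "card (I - J) = m * (n - 1) - m"
    by (simp add: card_J I_def card_cartesian_product)
  have slice: "y k \<in> S x k" if U: "merge (I - J) J (x, y) \<in> approx_event m n a K \<psi> q" and "k \<in> J"
    for x y k
  proof -
    let ?U = "merge (I - J) J (x, y)"
    obtain i where k: "k = (i, j0)" "i < m" using \<open>k \<in> J\<close> by (auto simp: J_def)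
    have "(\<Sum>j<n. ext_col a ?U i j * of_int (q j))
            = a i * of_int (q 0) + (\<Sum>j<n - 1. ?U (i, j) * of_int (q (Suc j)))"
      by (rule sum_ext_col[OF n])
    also have "\<dots> = c x i + y k * of_int (q (Suc j0))"
      using j0 k \<open>k \<in> J\<close> by (simp add: c_def sum.remove[of _ j0] I_def J_def merge_def)
    moreover have "dist_int (\<Sum>j<n. ext_col a ?U i j * of_int (q j)) \<le> \<psi>"
      using U k(2) unfolding approx_event_def by blast
    ultimately have "dist_int (c x i + y k * of_int (q (Suc j0))) \<le> \<psi>"
      by simp
    moreover have "\<bar>?U k\<bar> \<le> K"
      using U \<open>k \<in> J\<close> JI unfolding approx_event_def I_def by blast
    moreover have "?U k = y k" using \<open>k \<in> J\<close> by (simp add: merge_def)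
    ultimately show ?thesis by (simp add: S_def k abs_le_iff)
  qed
  have "emeasure (PiM I (\<lambda>_. lborel)) (approx_event m n a K \<psi> q)
          \<le> ennreal ((2 * K) ^ card (I - J) * ((2 * K + 3) * (2 * \<psi>)) ^ card J)"
  proof (rule emeasure_PiM_lborel_le_by_slices[where S = S])
    show "J \<subseteq> I" "K \<ge> 0" by (fact JI, fact K)
    show "approx_event m n a K \<psi> q \<in> sets (PiM I (\<lambda>_. lborel))"
      unfolding I_def by (rule sets_approx_event)
    show "\<bar>U k\<bar> \<le> K" if "U \<in> approx_event m n a K \<psi> q" "k \<in> I - J" for U k
      using that by (auto simp: approx_event_def I_def)
    show "S x k \<in> sets lborel" for x k
      unfolding S_def by measurable
    show "emeasure lborel (S x k) \<le> ennreal ((2 * K + 3) * (2 * \<psi>))" for x k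
      unfolding S_def by (rule emeasure_near_int_affine_le[OF j0(2) K \<psi>])
  qed (use K \<psi> slice in \<open>simp_all add: I_def\<close>)
  then show ?thesis
    unfolding I_def[symmetric] by (simp only: card_IJ card_J)
qed

definition shell_event ::
    "nat \<Rightarrow> nat \<Rightarrow> (nat \<Rightarrow> real) \<Rightarrow> real \<Rightarrow> (nat \<Rightarrow> real) \<Rightarrow> nat \<Rightarrow> (nat \<times> nat \<Rightarrow> real) set"
  where "shell_event m n a K \<Phi> t =
           (\<Union>q\<in>{q \<in> intvecs n - intvecs 1. inorm n q = t}. approx_event m n a K (\<Phi> t) q)"

lemma sets_shell_event: "shell_event m n a K \<Phi> t \<in> sets (PiM ({..<m} \<times> {..<n - 1}) (\<lambda>_. lborel))"
  unfolding shell_event_def using sets_approx_event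
  by (intro sets.finite_UN finite_subset[OF _ finite_intvecs_inorm_eq[of n t]]) auto

lemma shell_event_0: "shell_event m n a K \<Phi> 0 = {}"
proof -
  have "inorm n q \<ge> 1" if "q \<in> intvecs n - intvecs 1" for q
  proof (rule inorm_pos)
    show "q \<noteq> (\<lambda>_. 0)" using that by (auto simp: intvecs_def)
  qed (use that in blast)
  then show ?thesis by (force simp: shell_event_def)
qed

lemma emeasure_shell_event_le:
  assumes K: "K \<ge> 0" and \<Phi>: "0 \<le> \<Phi> t" "\<Phi> t \<le> 1"
  shows "emeasure (PiM ({..<m} \<times> {..<n - 1}) (\<lambda>_. lborel)) (shell_event m n a K \<Phi> t)
         \<le> ennreal ((2 * real t + 1) ^ n *
                     ((2 * K) ^ (m * (n - 1) - m) * ((2 * K + 3) * (2 * \<Phi> t)) ^ m))"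
proof -
  let ?M = "PiM ({..<m} \<times> {..<n - 1}) (\<lambda>_. lborel :: real measure)"
  let ?Q = "{q \<in> intvecs n - intvecs 1. inorm n q = t}"
  let ?b = "(2 * K) ^ (m * (n - 1) - m) * ((2 * K + 3) * (2 * \<Phi> t)) ^ m"
  have Q_sub: "?Q \<subseteq> {q \<in> intvecs n. inorm n q = t}" by auto
  have card_Q: "real (card ?Q) \<le> (2 * real t + 1) ^ n"
    using card_mono[OF finite_intvecs_inorm_eq Q_sub] card_intvecs_inorm_eq[of n t] by linarith
  have b: "?b \<ge> 0" using K \<Phi> by simp
  have "emeasure ?M (shell_event m n a K \<Phi> t) \<le> (\<Sum>q\<in>?Q. emeasure ?M (approx_event m n a K (\<Phi> t) q))"
    unfolding shell_event_def
    using finite_subset[OF Q_sub finite_intvecs_inorm_eq] sets_approx_event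
    by (intro emeasure_subadditive_finite) auto
  also have "\<dots> \<le> (\<Sum>q\<in>?Q. ennreal ?b)"
  proof (rule sum_mono)
    fix q assume "q \<in> ?Q"
    then obtain j0 where "j0 < n - 1" "q (Suc j0) \<noteq> 0"
      by (auto elim: ex_nonzero_tail_coord)
    then show "emeasure ?M (approx_event m n a K (\<Phi> t) q) \<le> ennreal ?b"
      by (rule emeasure_approx_event_le[OF _ _ K \<Phi>])
  qed
  also have "\<dots> = ennreal (real (card ?Q) * ?b)"
    using b by (simp add: ennreal_mult ennreal_of_nat_eq_real_of_nat)
  also have "\<dots> \<le> ennreal ((2 * real t + 1) ^ n * ?b)"
    using card_Q b by (intro ennreal_leI mult_right_mono)
  finally show ?thesis .
qed

lemma approx_event_if_approx_set:
  assumes U: "U \<in> space (PiM ({..<m} \<times> {..<n - 1}) (\<lambda>_. lborel))"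
    and K: "\<forall>k\<in>{..<m} \<times> {..<n - 1}. \<bar>U k\<bar> \<le> K"
    and pq: "(p, q) \<in> approx_set m n \<Psi> (ext_col a U)"
  shows "U \<in> approx_event m n a K (\<Psi> (inorm n q)) q"
proof -
  have "dist_int (\<Sum>j<n. ext_col a U i j * of_int (q j)) \<le> \<Psi> (inorm n q)" if "i < m" for i
  proof -
    have "dist_int (\<Sum>j<n. ext_col a U i j * of_int (q j))
            \<le> \<bar>(\<Sum>j<n. ext_col a U i j * of_int (q j)) - of_int (p i)\<bar>"
      by (rule dist_int_le)
    also have "\<dots> \<le> resnorm m n (ext_col a U) p q"
      by (rule abs_le_resnorm[OF that])
    also have "\<dots> \<le> \<Psi> (inorm n q)"
      using pq by (simp add: approx_set_def)
    finally show ?thesis .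
  qed
  with U K show ?thesis by (simp add: approx_event_def)
qed


lemma finite_tail_approx_set_if_not_in_shell_events:
  assumes U: "U \<in> space (PiM ({..<m} \<times> {..<n - 1}) (\<lambda>_. lborel))"
    and K: "\<forall>k\<in>{..<m} \<times> {..<n - 1}. \<bar>U k\<bar> \<le> K"
    and T: "\<And>t. t \<ge> T \<Longrightarrow> U \<notin> shell_event m n a K \<Phi> t"
  shows "finite {x \<in> approx_set m n \<Phi> (ext_col a U). snd x \<notin> intvecs 1}"
proof (rule finite_subset[OF _ finite_approx_set_inorm_less])
  have "inorm n q < T" if pq: "(p, q) \<in> approx_set m n \<Phi> (ext_col a U)" "q \<notin> intvecs 1" for p q
  proof -
    have "U \<in> approx_event m n a K (\<Phi> (inorm n q)) q"
      by (rule approx_event_if_approx_set[OF U K pq(1)])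
    with pq have "U \<in> shell_event m n a K \<Phi> (inorm n q)"
      by (auto simp: shell_event_def approx_set_def)
    then show ?thesis using T not_le by blast
  qed
  then show "{x \<in> approx_set m n \<Phi> (ext_col a U). snd x \<notin> intvecs 1}
               \<subseteq> {x \<in> approx_set m n \<Phi> (ext_col a U). inorm n (snd x) < T}"
    by auto
qed

lemma AE_eventually_not_in_if_summable:
  assumes sets: "\<And>t. A t \<in> sets M" and le: "\<And>t. emeasure M (A t) \<le> ennreal (b t)"
    and nonneg: "\<And>t. b t \<ge> 0" and summable: "summable b"
  shows "AE x in M. eventually (\<lambda>t. x \<notin> A t) sequentially"
proof -
  have fin: "emeasure M (A t) < \<infinity>" for t
    using le[of t] by (simp add: le_less_trans)
  have "measure M (A t) \<le> b t" for t
    using le[of t] fin[of t] nonneg[of t] by (simp add: emeasure_eq_ennreal_measure)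
  then have "summable (\<lambda>t. measure M (A t))"
    by (intro summable_comparison_test'[OF summable]) auto
  then have "AE x in M. eventually (\<lambda>t. x \<in> space M - A t) sequentially"
    by (rule borel_cantelli_AE1[OF sets fin])
  then show ?thesis
    by (rule AE_mp) (auto intro!: AE_I2 elim: eventually_mono)
qed

lemma summable_shell_count_mult_power:
  fixes \<Phi> :: "nat \<Rightarrow> real"
  assumes m: "m \<ge> 1" and \<Phi>: "\<And>t. \<Phi> t > 0"
    and lim: "Liminf sequentially (\<lambda>t. ereal (- ln (\<Phi> t) / ln (real t)))
                > ereal ((real n + 1) / real m)"
  shows "summable (\<lambda>t. (2 * real t + 1) ^ n * \<Phi> t ^ m)"
proof -
  obtain r where r: "(real n + 1) / real m < r"
    and less_lim: "ereal r < Liminf sequentially (\<lambda>t. ereal (- ln (\<Phi> t) / ln (real t)))"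
    using ereal_dense2[OF lim] by auto
  have rm: "r * real m > real n + 1"
    using r m by (simp add: field_simps)
  have "eventually (\<lambda>t. norm ((2 * real t + 1) ^ n * \<Phi> t ^ m)
                         \<le> 3 ^ n * real t powr (real n - r * real m)) sequentially"
    using less_LiminfD[OF less_lim] eventually_ge_at_top[of 2]
  proof eventually_elim
    case (elim t)
    have t: "real t \<ge> 2" using elim(2) by simp
    have "r * ln (real t) < - ln (\<Phi> t)"
      using elim(1) t by (simp add: field_simps)
    then have "ln (\<Phi> t) < ln (real t powr (- r))"
      using t by (simp add: ln_powr)
    then have "\<Phi> t < real t powr (- r)"
      using ln_less_cancel_iff[of "\<Phi> t" "real t powr (- r)"] \<Phi>[of t] t by simp
    then have "\<Phi> t ^ m \<le> (real t powr (- r)) ^ m"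
      using \<Phi>[of t] by (intro power_mono) auto
    also have "\<dots> = real t powr (- r * real m)"
      using t by (simp add: powr_realpow[symmetric] powr_powr)
    finally have \<Phi>_pow: "\<Phi> t ^ m \<le> real t powr (- r * real m)" .
    have "(2 * real t + 1) ^ n \<le> (3 * real t) ^ n"
      using t by (intro power_mono) auto
    also have "\<dots> = 3 ^ n * real t powr real n"
      using t by (simp add: power_mult_distrib powr_realpow)
    finally have "norm ((2 * real t + 1) ^ n * \<Phi> t ^ m)
                    \<le> (3 ^ n * real t powr real n) * real t powr (- r * real m)"
      using \<Phi>_pow \<Phi>[of t] by (simp add: mult_mono)
    also have "\<dots> = 3 ^ n * real t powr (real n - r * real m)"
      by (simp add: powr_add[symmetric])
    finally show ?case .
  qed
  moreover have "summable (\<lambda>t. 3 ^ n * real t powr (real n - r * real m))"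
    using rm by (intro summable_mult) (simp add: summable_real_powr_iff)
  ultimately show ?thesis by (rule summable_comparison_test_ev)
qed

lemma AE_bounded_imp_finite_tail_approx_set:
  fixes K :: real
  assumes m: "m \<ge> 1" and \<Phi>: "\<And>t. \<Phi> t > 0" and \<Phi>_le_1: "\<And>t. t \<ge> 1 \<Longrightarrow> \<Phi> t \<le> 1"
    and lim: "Liminf sequentially (\<lambda>t. ereal (- ln (\<Phi> t) / ln (real t)))
                > ereal ((real n + 1) / real m)"
    and K: "K \<ge> 0"
  shows "AE U in PiM ({..<m} \<times> {..<n - 1}) (\<lambda>_. lborel).
           (\<forall>k\<in>{..<m} \<times> {..<n - 1}. \<bar>U k\<bar> \<le> K) \<longrightarrow>
           finite {x \<in> approx_set m n \<Phi> (ext_col a U). snd x \<notin> intvecs 1}"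
proof -
  let ?M = "PiM ({..<m} \<times> {..<n - 1}) (\<lambda>_. lborel :: real measure)"
  define C where "C = (2 * K) ^ (m * (n - 1) - m) * ((2 * K + 3) * 2) ^ m"
  have C: "C \<ge> 0" using K by (simp add: C_def)
  have shell_le:
    "emeasure ?M (shell_event m n a K \<Phi> t) \<le> ennreal (C * ((2 * real t + 1) ^ n * \<Phi> t ^ m))" for t
  proof (cases "t = 0")
    case False
    then have "emeasure ?M (shell_event m n a K \<Phi> t)
            \<le> ennreal ((2 * real t + 1) ^ n *
                     ((2 * K) ^ (m * (n - 1) - m) * ((2 * K + 3) * (2 * \<Phi> t)) ^ m))"
      using \<Phi>[of t] \<Phi>_le_1[of t] by (intro emeasure_shell_event_le K) auto
    also have "\<dots> = ennreal (C * ((2 * real t + 1) ^ n * \<Phi> t ^ m))"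
      by (simp add: C_def power_mult_distrib mult_ac)
    finally show ?thesis .
  qed (simp add: shell_event_0)
  have "AE U in ?M. eventually (\<lambda>t. U \<notin> shell_event m n a K \<Phi> t) sequentially"
  proof (rule AE_eventually_not_in_if_summable[OF sets_shell_event shell_le])
    show "summable (\<lambda>t. C * ((2 * real t + 1) ^ n * \<Phi> t ^ m))"
      by (intro summable_mult summable_shell_count_mult_power[OF m \<Phi> lim])
  qed (use C \<Phi> in \<open>simp add: less_imp_le\<close>)
  then show ?thesis
    using AE_space
  proof eventually_elim
    case (elim U)
    then obtain T where "\<And>t. t \<ge> T \<Longrightarrow> U \<notin> shell_event m n a K \<Phi> t"
      by (auto simp: eventually_sequentially)
    with elim(2) show ?case
      by (blast intro: finite_tail_approx_set_if_not_in_shell_events)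
  qed
qed

lemma AE_finite_tail_approx_set:
  assumes m: "m \<ge> 1" and \<Phi>: "\<And>t. \<Phi> t > 0" and \<Phi>_le_1: "\<And>t. t \<ge> 1 \<Longrightarrow> \<Phi> t \<le> 1"
    and lim: "Liminf sequentially (\<lambda>t. ereal (- ln (\<Phi> t) / ln (real t)))
                > ereal ((real n + 1) / real m)"
  shows "AE U in PiM ({..<m} \<times> {..<n - 1}) (\<lambda>_. lborel).
           finite {x \<in> approx_set m n \<Phi> (ext_col a U). snd x \<notin> intvecs 1}"
proof -
  let ?I = "{..<m} \<times> {..<n - 1}"
  have "AE U in PiM ?I (\<lambda>_. lborel). \<forall>K::nat. (\<forall>k\<in>?I. \<bar>U k\<bar> \<le> real K) \<longrightarrow>
          finite {x \<in> approx_set m n \<Phi> (ext_col a U). snd x \<notin> intvecs 1}"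
    unfolding AE_all_countable
    using AE_bounded_imp_finite_tail_approx_set[OF m \<Phi> \<Phi>_le_1 lim of_nat_0_le_iff] ..
  then show ?thesis
  proof (rule AE_mp, intro AE_I2 impI)
    fix U assume all_K: "\<forall>K::nat. (\<forall>k\<in>?I. \<bar>U k\<bar> \<le> real K) \<longrightarrow>
                           finite {x \<in> approx_set m n \<Phi> (ext_col a U). snd x \<notin> intvecs 1}"
    define K where "K = nat \<lceil>\<Sum>k\<in>?I. \<bar>U k\<bar>\<rceil>"
    have "\<bar>U k\<bar> \<le> real K" if "k \<in> ?I" for k
    proof -
      have "\<bar>U k\<bar> \<le> (\<Sum>k\<in>?I. \<bar>U k\<bar>)"
        using that by (intro member_le_sum) auto
      then show ?thesis unfolding K_def by linarith
    qed
    then show "finite {x \<in> approx_set m n \<Phi> (ext_col a U). snd x \<notin> intvecs 1}"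
      using all_K by blast
  qed
qed

theorem lemma5p2:
  fixes m n :: nat and \<Phi> :: "nat \<Rightarrow> real" and a :: "nat \<Rightarrow> real"
  assumes "m \<ge> 1" and "n \<ge> 1"
    and "\<And>t. \<Phi> t > 0"
    and "\<And>t. t \<ge> 1 \<Longrightarrow> \<Phi> t \<le> real t powr (- (real n / real m))"
    and "Liminf sequentially (\<lambda>t. ereal (- ln (\<Phi> t) / ln (real t)))
           > ereal (real (max (n + 1) (m + 2)) / real m)"
    and "(\<lambda>i j. a i) \<in> Exact m 1 \<Phi>"
  shows "AE U in PiM ({..<m} \<times> {..<n - 1}) (\<lambda>_. lborel).
           (\<lambda>i j. if j = 0 then a i else U (i, j - 1)) \<in> Exact m n \<Phi>"
proof -
  have \<Phi>_le_1: "\<Phi> t \<le> 1" if "t \<ge> 1" for t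
  proof -
    have "real t powr (- (real n / real m)) \<le> 1"
      using that by (simp add: powr_minus inverse_le_1_iff ge_one_powr_ge_zero)
    then show ?thesis using assms(4)[OF that] by linarith
  qed
  have "ereal ((real n + 1) / real m) \<le> ereal (real (max (n + 1) (m + 2)) / real m)"
    by (simp add: divide_right_mono)
  then have lim: "Liminf sequentially (\<lambda>t. ereal (- ln (\<Phi> t) / ln (real t)))
                    > ereal ((real n + 1) / real m)"
    using assms(5) by (rule le_less_trans)
  have "AE U in PiM ({..<m} \<times> {..<n - 1}) (\<lambda>_. lborel).
          finite {x \<in> approx_set m n \<Phi> (ext_col a U). snd x \<notin> intvecs 1}"
    by (rule AE_finite_tail_approx_set[OF assms(1,3) \<Phi>_le_1 lim])
  then show ?thesis
  proof (rule AE_mp, intro AE_I2 impI)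
    fix U assume "finite {x \<in> approx_set m n \<Phi> (ext_col a U). snd x \<notin> intvecs 1}"
    then have "ext_col a U \<in> Exact m n \<Phi>"
      by (rule ext_col_in_Exact[OF assms(2,3,6)])
    then show "(\<lambda>i j. if j = 0 then a i else U (i, j - 1)) \<in> Exact m n \<Phi>"
      by (simp add: ext_col_def)
  qed
qed

end
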